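(* Let $k\ge 2$ and consider any urn of $k$ balls, and the Poisson sampling model with parameter $n>0$. Let $\alpha,\beta>0$ with $\beta>\alpha$, and set $L=\alpha\log k$ and $M=\frac{\beta k\log k}{n}$, assumed to be integers. Let $w=(w_1,\dots,w_L)^\top\in\mathbb{R}^L$ and define $u_j=w_j\, j!\,\big(\frac{k}{nM}\big)^j$ for $j\in\{1,\dots,L\}$ and $u_j=0$ for $j=0$ and for $j>L$. Define $\tilde C=\hat C_{\rm seen}+\sum_{j\ge1}u_j\Phi_j$ and $\hat C=\min\{\max\{\tilde C,\hat C_{\rm seen}\},k\}$. Then $$\mathbb{E}(\hat C-C)^2\le k^2e^{-2n/k}\|Bw-\mathbf 1\|_\infty^2+ke^{-n/k}+k\max_{m\in\{1,\dots,M\}}\mathbb{E}_{N\sim\mathrm{Poi}(nm/k)}[u_N^2]+k^{-(\beta-\alpha\log\frac{e\beta}{\alpha}-3)}.$$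
   Context: An urn contains $k$ balls, each having a color; $k_i$ is the number of balls of color $i$ ($\sum_i k_i=k$) and $C=\sum_i\mathbf 1\{k_i>0\}$ is the number of distinct colors. Poisson sampling model: a random number $N\sim\mathrm{Poi}(n)$ of balls is drawn uniformly at random with replacement from the urn, $N$ independent of the draws. Equivalently, the histograms $N_i$ (number of observed balls of color $i$) are independent with $N_i\sim\mathrm{Poi}(nk_i/k)$. The fingerprints are $\Phi_j=\#\{i:N_i=j\}$ for $j\ge 0$, and $\hat C_{\rm seen}=\sum_{j\ge1}\Phi_j$ is the number of observed colors. $B$ is the $M\times L$ matrix with entries $B_{ij}=(i/M)^j$, $1\le i\le M$, $1\le j\le L$; $\mathbf 1$ is the all-ones vector in $\mathbb{R}^M$; $\|\cdot\|_\infty$ is the vector max-norm. Logarithms are natural. The expectation is over the sampling, for the fixed urn. *)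

theory Defs
  imports "HOL-Analysis.Analysis" "HOL-Probability.Probability"
begin

text \<open>Urn: a finite set I of colors (those present), kc i \<ge> 1 balls of color i.
  A histogram is a function N assigning to each color its number of observed balls.\<close>

definition fingerprint :: "'c set \<Rightarrow> ('c \<Rightarrow> nat) \<Rightarrow> nat \<Rightarrow> nat" where
  "fingerprint I N j = card {i \<in> I. N i = j}"

text \<open>Sums over j \<ge> 1 are infinite sums (infsum); only finitely many terms are nonzero.\<close>
definition C_seen :: "'c set \<Rightarrow> ('c \<Rightarrow> nat) \<Rightarrow> real" where
  "C_seen I N = infsum (\<lambda>j. real (fingerprint I N j)) {1..}"

definition poisson_hist :: "'c set \<Rightarrow> ('c \<Rightarrow> nat) \<Rightarrow> real \<Rightarrow> ('c \<Rightarrow> nat) pmf" where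
  "poisson_hist I kc n =
     Pi_pmf I 0 (\<lambda>i. poisson_pmf (n * real (kc i) / real (\<Sum>i\<in>I. kc i)))"

definition u_coef :: "(nat \<Rightarrow> real) \<Rightarrow> nat \<Rightarrow> nat \<Rightarrow> real \<Rightarrow> real \<Rightarrow> nat \<Rightarrow> real" where
  "u_coef w L M k n j =
     (if 1 \<le> j \<and> j \<le> L then w j * fact j * (k / (n * real M)) ^ j else 0)"

definition C_tilde :: "'c set \<Rightarrow> (nat \<Rightarrow> real) \<Rightarrow> ('c \<Rightarrow> nat) \<Rightarrow> real" where
  "C_tilde I u N = C_seen I N + infsum (\<lambda>j. u j * real (fingerprint I N j)) {1..}"

definition C_hat :: "'c set \<Rightarrow> (nat \<Rightarrow> real) \<Rightarrow> real \<Rightarrow> ('c \<Rightarrow> nat) \<Rightarrow> real" where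
  "C_hat I u k N = min (max (C_tilde I u N) (C_seen I N)) k"

text \<open>\<parallel>B w - 1\<parallel>_\<infinity>, with B_{ij} = (i/M)^j, 1 \<le> i \<le> M, 1 \<le> j \<le> L.\<close>
definition Bw_err :: "nat \<Rightarrow> nat \<Rightarrow> (nat \<Rightarrow> real) \<Rightarrow> real" where
  "Bw_err M L w = Max ((\<lambda>i. \<bar>(\<Sum>j=1..L. (real i / real M) ^ j * w j) - 1\<bar>) ` {1..M})"

end

theory Submission
  imports Defs
begin

text \<open>
  Put X v = u v - [v = 0]. Then C_tilde - C is the sum of X (N_i) over the colors, and since C
  lies in [C_seen, k], clipping to that interval gives |C_hat - C| <= min k |C_tilde - C|.
  Split the colors at k_i <= M. A color with more balls has Poisson rate lambda >= beta log k, so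
  X (N_i) = 0 unless N_i <= L, an event of probability at most e^(-lambda) (e lambda / L)^L
  <= k^(-(beta - alpha log (e beta / alpha))) by a Chernoff bound; such an event costs at most k^2.
  The small colors contribute independent summands: the choice of u makes the mean of X (N_i)
  equal to e^(-lambda_i) ((B w)_(k_i) - 1), which gives the bias term, and the second moment is
  E u_N^2 + e^(-lambda_i), which gives the variance terms.
\<close>

section \<open>Products of probability mass functions\<close>

lemma integrable_measure_pmf_bounded:
  fixes f :: "'a \<Rightarrow> real"
  assumes "\<And>x. \<bar>f x\<bar> \<le> B"
  shows "integrable (measure_pmf p) f"
  by (rule measure_pmf.integrable_const_bound[where B = B]) (use assms in auto)

lemma expectation_Pi_pmf_component:
  fixes f :: "'b \<Rightarrow> real"
  assumes "finite I" "i \<in> I"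
  shows "measure_pmf.expectation (Pi_pmf I d p) (\<lambda>y. f (y i)) = measure_pmf.expectation (p i) f"
proof -
  have "measure_pmf.expectation (Pi_pmf I d p) (\<lambda>y. f (y i))
      = measure_pmf.expectation (map_pmf (\<lambda>y. y i) (Pi_pmf I d p)) f"
    by simp
  also have "map_pmf (\<lambda>y. y i) (Pi_pmf I d p) = p i"
    using assms by (simp add: Pi_pmf_component)
  finally show ?thesis .
qed

lemma integrable_Pi_pmf_component:
  fixes f :: "'b \<Rightarrow> real"
  assumes "finite I" "i \<in> I" "integrable (measure_pmf (p i)) f"
  shows "integrable (measure_pmf (Pi_pmf I d p)) (\<lambda>y. f (y i))"
proof -
  have "map_pmf (\<lambda>y. y i) (Pi_pmf I d p) = p i"
    using assms by (simp add: Pi_pmf_component)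
  with assms(3) show ?thesis
    by (metis integrable_map_pmf_eq)
qed

lemma expectation_Pi_pmf_mult_components:
  fixes f g :: "'b \<Rightarrow> real"
  assumes I: "finite I" "i \<in> I" "j \<in> I" "i \<noteq> j"
    and f: "integrable (measure_pmf (p i)) f" and g: "integrable (measure_pmf (p j)) g"
  shows "measure_pmf.expectation (Pi_pmf I d p) (\<lambda>y. f (y i) * g (y j))
       = measure_pmf.expectation (p i) f * measure_pmf.expectation (p j) g"
proof -
  let ?P = "measure_pmf (Pi_pmf I d p)"
  have "prob_space.indep_vars ?P (\<lambda>_. count_space UNIV) (\<lambda>x y. y x) I"
    using I(1) by (rule indep_vars_Pi_pmf)
  then have "prob_space.indep_var ?P
      (Pi\<^sub>M {i} (\<lambda>_. count_space UNIV)) (\<lambda>y. restrict y {i})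
      (Pi\<^sub>M {j} (\<lambda>_. count_space UNIV)) (\<lambda>y. restrict y {j})"
    using I by (intro prob_space.indep_var_restrict[OF measure_pmf.prob_space_axioms]) auto
  then have "prob_space.indep_var ?P
      borel ((\<lambda>h. f (h i)) \<circ> (\<lambda>y. restrict y {i})) borel ((\<lambda>h. g (h j)) \<circ> (\<lambda>y. restrict y {j}))"
    by (rule prob_space.indep_var_compose[OF measure_pmf.prob_space_axioms])
      (rule measurable_compose[OF measurable_component_singleton]; simp)+
  then have "prob_space.indep_var ?P borel (\<lambda>y. f (y i)) borel (\<lambda>y. g (y j))"
    by (simp add: comp_def)
  then have "measure_pmf.expectation (Pi_pmf I d p) (\<lambda>y. f (y i) * g (y j))
      = measure_pmf.expectation (Pi_pmf I d p) (\<lambda>y. f (y i))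
        * measure_pmf.expectation (Pi_pmf I d p) (\<lambda>y. g (y j))"
    using integrable_Pi_pmf_component[where p = p and d = d, OF I(1,2) f]
      integrable_Pi_pmf_component[where p = p and d = d, OF I(1,3) g]
    by (intro prob_space.indep_var_lebesgue_integral[OF measure_pmf.prob_space_axioms])
  then show ?thesis
    using expectation_Pi_pmf_component[where p = p and d = d, OF I(1,2)]
      expectation_Pi_pmf_component[where p = p and d = d, OF I(1,3)]
    by simp
qed

lemma expectation_Pi_pmf_product_components:
  fixes X :: "'b \<Rightarrow> real"
  assumes "finite I" "i \<in> I" "j \<in> I" and bounded: "\<And>v. \<bar>X v\<bar> \<le> B"
  shows "measure_pmf.expectation (Pi_pmf I d p) (\<lambda>y. X (y i) * X (y j))
    = (if i = j then measure_pmf.expectation (p i) (\<lambda>v. (X v)\<^sup>2)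
       else measure_pmf.expectation (p i) X * measure_pmf.expectation (p j) X)"
proof (cases "i = j")
  case True
  then show ?thesis
    using expectation_Pi_pmf_component[where f = "\<lambda>v. (X v)\<^sup>2" and p = p and d = d, OF assms(1,2)]
    by (simp add: power2_eq_square)
next
  case False
  have integrable: "integrable (measure_pmf q) X" for q
    using bounded by (rule integrable_measure_pmf_bounded)
  with False show ?thesis
    using expectation_Pi_pmf_mult_components[OF assms(1-3) False integrable integrable] by simp
qed

lemma expectation_Pi_pmf_sum_square:
  fixes X :: "'b \<Rightarrow> real"
  assumes "finite I" "A \<subseteq> I" and bounded: "\<And>v. \<bar>X v\<bar> \<le> B"
  shows "measure_pmf.expectation (Pi_pmf I d p) (\<lambda>y. (\<Sum>i\<in>A. X (y i))\<^sup>2)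
    = (\<Sum>i\<in>A. measure_pmf.expectation (p i) (\<lambda>v. (X v)\<^sup>2) - (measure_pmf.expectation (p i) X)\<^sup>2)
      + (\<Sum>i\<in>A. measure_pmf.expectation (p i) X)\<^sup>2"
proof -
  let ?E = "measure_pmf.expectation (Pi_pmf I d p)"
  let ?m = "\<lambda>i. measure_pmf.expectation (p i) X"
  let ?a = "\<lambda>i. measure_pmf.expectation (p i) (\<lambda>v. (X v)\<^sup>2)"
  have finite_A: "finite A"
    using assms(1,2) by (rule finite_subset[rotated])
  have integrable_XX: "integrable (measure_pmf (Pi_pmf I d p)) (\<lambda>y. X (y i) * X (y j))" for i j
  proof (rule integrable_measure_pmf_bounded)
    fix y show "\<bar>X (y i) * X (y j)\<bar> \<le> B * B"
      unfolding abs_mult by (rule mult_mono) (use bounded abs_ge_zero order_trans in blast)+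
  qed
  have "?E (\<lambda>y. (\<Sum>i\<in>A. X (y i))\<^sup>2) = (\<Sum>i\<in>A. \<Sum>j\<in>A. ?E (\<lambda>y. X (y i) * X (y j)))"
    using integrable_XX
    by (simp add: power2_eq_square sum_product Bochner_Integration.integrable_sum)
  also have "\<dots> = (\<Sum>i\<in>A. \<Sum>j\<in>A. (if i = j then ?a i - ?m i * ?m j else 0) + ?m i * ?m j)"
  proof (intro sum.cong refl)
    fix i j assume "i \<in> A" "j \<in> A"
    with assms(2) have "i \<in> I" "j \<in> I"
      by auto
    then show "?E (\<lambda>y. X (y i) * X (y j)) = (if i = j then ?a i - ?m i * ?m j else 0) + ?m i * ?m j"
      using expectation_Pi_pmf_product_components[where X = X and d = d and p = p,
          OF assms(1) _ _ bounded]
      by simp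
  qed
  also have "\<dots> = (\<Sum>i\<in>A. ?a i - (?m i)\<^sup>2) + (\<Sum>i\<in>A. ?m i)\<^sup>2"
    by (simp add: sum.distrib power2_eq_square sum_product finite_A)
  finally show ?thesis .
qed

lemma integrable_Pi_pmf_sum_square:
  fixes X :: "'b \<Rightarrow> real"
  assumes "\<And>v. \<bar>X v\<bar> \<le> B"
  shows "integrable (measure_pmf (Pi_pmf I d p)) (\<lambda>y. (\<Sum>i\<in>A. X (y i))\<^sup>2)"
proof (rule integrable_measure_pmf_bounded)
  fix y
  have "\<bar>\<Sum>i\<in>A. X (y i)\<bar> \<le> real (card A) * B"
    by (rule order_trans[OF sum_abs sum_bounded_above]) (rule assms)
  then have "\<bar>\<Sum>i\<in>A. X (y i)\<bar>\<^sup>2 \<le> (real (card A) * B)\<^sup>2"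
    by (rule power_mono) simp
  then show "\<bar>(\<Sum>i\<in>A. X (y i))\<^sup>2\<bar> \<le> (real (card A) * B)\<^sup>2"
    by simp
qed

lemma expectation_Pi_pmf_sum_square_le:
  fixes X :: "'b \<Rightarrow> real"
  assumes "finite I" "A \<subseteq> I" "\<And>v. \<bar>X v\<bar> \<le> B" "real (card A) \<le> c"
    and second_moment: "\<And>i. i \<in> A \<Longrightarrow> measure_pmf.expectation (p i) (\<lambda>v. (X v)\<^sup>2) \<le> V"
    and mean: "\<And>i. i \<in> A \<Longrightarrow> \<bar>measure_pmf.expectation (p i) X\<bar> \<le> b"
    and "0 \<le> V" "0 \<le> b"
  shows "measure_pmf.expectation (Pi_pmf I d p) (\<lambda>y. (\<Sum>i\<in>A. X (y i))\<^sup>2) \<le> c * V + (c * b)\<^sup>2"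
proof -
  let ?m = "\<lambda>i. measure_pmf.expectation (p i) X"
  let ?a = "\<lambda>i. measure_pmf.expectation (p i) (\<lambda>v. (X v)\<^sup>2)"
  have "(\<Sum>i\<in>A. ?a i - (?m i)\<^sup>2) \<le> real (card A) * V"
    by (rule sum_bounded_above) (smt (verit) second_moment zero_le_power2)
  also have "\<dots> \<le> c * V"
    using assms(4,7) by (rule mult_right_mono)
  finally have variance: "(\<Sum>i\<in>A. ?a i - (?m i)\<^sup>2) \<le> c * V" .
  have "\<bar>\<Sum>i\<in>A. ?m i\<bar> \<le> (\<Sum>i\<in>A. \<bar>?m i\<bar>)"
    by (rule sum_abs)
  also have "\<dots> \<le> real (card A) * b"
    by (rule sum_bounded_above) (rule mean)
  also have "\<dots> \<le> c * b"
    using assms(4,8) by (rule mult_right_mono)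
  finally have "(\<Sum>i\<in>A. ?m i)\<^sup>2 \<le> (c * b)\<^sup>2"
    by (metis abs_le_square_iff abs_ge_zero abs_of_nonneg order_trans)
  with variance show ?thesis
    using expectation_Pi_pmf_sum_square[where d = d and p = p and X = X, OF assms(1-3)] by linarith
qed

section \<open>Poisson distribution\<close>

lemma exp_partial_sum_le:
  fixes x :: real
  assumes "0 \<le> x"
  shows "(\<Sum>j\<le>m. x ^ j / fact j) \<le> exp x"
proof -
  have sums: "(\<lambda>j. x ^ j / fact j) sums exp x"
    using exp_converges[of x] by (simp add: divide_inverse mult.commute)
  have "(\<Sum>j\<le>m. x ^ j / fact j) \<le> suminf (\<lambda>j. x ^ j / fact j)"
    by (rule sum_le_suminf) (use sums assms in \<open>auto simp: sums_summable\<close>)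
  with sums show ?thesis
    using sums_unique by metis
qed

lemma expectation_poisson_finite_support:
  fixes f :: "nat \<Rightarrow> real"
  assumes "0 < lam" and "\<And>j. L < j \<Longrightarrow> f j = 0"
  shows "measure_pmf.expectation (poisson_pmf lam) f = (\<Sum>j\<le>L. f j * (lam ^ j / fact j * exp (- lam)))"
proof -
  have "measure_pmf.expectation (poisson_pmf lam) f = (\<Sum>j\<le>L. f j * pmf (poisson_pmf lam) j)"
    by (rule integral_measure_pmf_real) (use assms(2) not_le in auto)
  with assms(1) show ?thesis
    by simp
qed

lemma expectation_square_minus_indicator_zero:
  fixes u :: "nat \<Rightarrow> real"
  assumes "u 0 = 0" and "\<And>v. \<bar>u v\<bar> \<le> B"
  shows "measure_pmf.expectation p (\<lambda>v. (u v - of_bool (v = 0))\<^sup>2)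
       = measure_pmf.expectation p (\<lambda>v. (u v)\<^sup>2) + pmf p 0"
proof -
  have "(u v - of_bool (v = 0))\<^sup>2 = (u v)\<^sup>2 + of_bool (v = 0)" for v
    using assms(1) by (cases "v = 0") simp_all
  moreover have "integrable (measure_pmf p) (\<lambda>v. (u v)\<^sup>2)"
  proof (rule integrable_measure_pmf_bounded)
    fix v show "\<bar>(u v)\<^sup>2\<bar> \<le> B\<^sup>2"
      using power_mono[OF assms(2)[of v] abs_ge_zero, of 2] by simp
  qed
  moreover have "integrable (measure_pmf p) (\<lambda>v. of_bool (v = 0) :: real)"
    by (rule integrable_measure_pmf_bounded[where B = 1]) simp
  moreover have "measure_pmf.expectation p (\<lambda>v. of_bool (v = 0) :: real) = pmf p 0"
    by (subst integral_measure_pmf_real[where A = "{0}"]) simp_all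
  ultimately show ?thesis
    by (simp add: Bochner_Integration.integral_add)
qed

lemma poisson_prob_atMost_le:
  assumes "1 \<le> L" and "real L \<le> lam"
  shows "measure_pmf.prob (poisson_pmf lam) {..L} \<le> exp (- lam) * (exp 1 * lam / real L) ^ L"
proof -
  have lam: "0 < lam" and L: "0 < real L"
    using assms by auto
  have "measure_pmf.prob (poisson_pmf lam) {..L} = (\<Sum>j\<le>L. lam ^ j / fact j) * exp (- lam)"
    using lam by (simp add: measure_measure_pmf_finite sum_distrib_right)
  also have "(\<Sum>j\<le>L. lam ^ j / fact j) \<le> (lam / L) ^ L * (\<Sum>j\<le>L. real L ^ j / fact j)"
    unfolding sum_distrib_left
  proof (rule sum_mono)
    fix j assume "j \<in> {..L}"
    have "lam ^ j = (lam / L) ^ j * real L ^ j"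
      using L by (simp add: power_mult_distrib[symmetric])
    also have "\<dots> \<le> (lam / L) ^ L * real L ^ j"
      using \<open>j \<in> {..L}\<close> assms L by (intro mult_right_mono power_increasing) auto
    finally show "lam ^ j / fact j \<le> (lam / L) ^ L * (real L ^ j / fact j)"
      by (simp add: divide_right_mono)
  qed
  also have "\<dots> \<le> (lam / L) ^ L * exp (real L)"
    using lam L by (intro mult_left_mono exp_partial_sum_le) auto
  finally have "measure_pmf.prob (poisson_pmf lam) {..L} \<le> (lam / L) ^ L * exp (real L) * exp (- lam)"
    by (simp add: mult_right_mono)
  also have "\<dots> = exp (- lam) * (exp 1 * lam / real L) ^ L"
  proof -
    have "exp (real L) = exp 1 ^ L"
      using exp_of_nat_mult[of L 1] by simp
    moreover have "(exp 1 * lam / real L) ^ L = exp 1 ^ L * (lam / L) ^ L"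
      by (simp add: power_mult_distrib[symmetric] mult.assoc)
    ultimately show ?thesis
      by simp
  qed
  finally show ?thesis .
qed

lemma chernoff_bound_eq_exp:
  assumes "0 < L" "0 < lam"
  shows "exp (- lam) * (exp 1 * lam / real L) ^ L = exp (- lam + real L * (1 + ln lam - ln (real L)))"
proof -
  have "(exp 1 * lam / real L) ^ L = exp (real L * ln (exp 1 * lam / real L))"
    using assms by (simp add: exp_of_nat_mult[symmetric] ln_realpow[symmetric])
  with assms show ?thesis
    by (simp add: exp_add[symmetric] ln_mult ln_div)
qed

lemma chernoff_bound_antimono:
  assumes "0 < L" "real L \<le> lam" "lam \<le> lam'"
  shows "exp (- lam') * (exp 1 * lam' / real L) ^ L \<le> exp (- lam) * (exp 1 * lam / real L) ^ L"
proof -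
  have lam: "0 < lam" "0 < lam'"
    using assms by auto
  have "real L * (ln lam' - ln lam) \<le> real L * (lam' / lam - 1)"
    using lam ln_le_minus_one[of "lam' / lam"] by (intro mult_left_mono) (simp_all add: ln_div)
  also have "\<dots> \<le> lam * (lam' / lam - 1)"
    using assms lam by (intro mult_right_mono) auto
  also have "\<dots> = lam' - lam"
    using lam by (simp add: field_simps)
  finally show ?thesis
    unfolding chernoff_bound_eq_exp[OF assms(1) lam(1)] chernoff_bound_eq_exp[OF assms(1) lam(2)]
    by (simp add: algebra_simps)
qed

lemma chernoff_bound_at_log:
  fixes a b k :: real
  assumes "1 < k" "0 < a" "0 < b" "real L = a * ln k"
  shows "exp (- (b * ln k)) * (exp 1 * (b * ln k) / real L) ^ L = k powr (- b + a * ln (exp 1 * b / a))"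
proof -
  have "0 < ln k"
    using assms(1) by simp
  with assms(2,4) have "0 < L"
    by (metis mult_pos_pos of_nat_0_less_iff)
  have "0 < b * ln k"
    using assms(3) \<open>0 < ln k\<close> by simp
  have exponent: "- (b * ln k) + real L * (1 + ln (b * ln k) - ln (real L))
      = (- b + a * ln (exp 1 * b / a)) * ln k"
    using assms \<open>0 < ln k\<close> by (simp add: ln_mult ln_div algebra_simps)
  show ?thesis
    unfolding chernoff_bound_eq_exp[OF \<open>0 < L\<close> \<open>0 < b * ln k\<close>] exponent powr_def
    using assms(1) by simp
qed

section \<open>The clipped estimator\<close>

lemma infsum_fingerprint:
  assumes "finite I"
  shows "infsum (\<lambda>j. g j * real (fingerprint I N j)) {1..} = (\<Sum>i\<in>I. if 0 < N i then g (N i) else 0)"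
proof -
  let ?T = "N ` I \<inter> {1..}"
  have "infsum (\<lambda>j. g j * real (fingerprint I N j)) {1..} = infsum (\<lambda>j. g j * real (fingerprint I N j)) ?T"
    by (rule infsum_cong_neutral) (auto simp: fingerprint_def card_gt_0_iff)
  also have "\<dots> = (\<Sum>j\<in>?T. g j * real (fingerprint I N j))"
    using assms by (intro infsum_finite) auto
  also have "\<dots> = (\<Sum>j\<in>?T. \<Sum>i\<in>{i\<in>{i\<in>I. 0 < N i}. N i = j}. g (N i))"
  proof (rule sum.cong[OF refl])
    fix j assume "j \<in> ?T"
    then have "{i\<in>{i\<in>I. 0 < N i}. N i = j} = {i\<in>I. N i = j}"
      by auto
    then show "g j * real (fingerprint I N j) = (\<Sum>i\<in>{i\<in>{i\<in>I. 0 < N i}. N i = j}. g (N i))"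
      by (simp add: fingerprint_def)
  qed
  also have "\<dots> = (\<Sum>i\<in>{i\<in>I. 0 < N i}. g (N i))"
    by (rule sum.group) (use assms in auto)
  also have "\<dots> = (\<Sum>i\<in>I. if 0 < N i then g (N i) else 0)"
    using assms by (simp add: sum.inter_filter)
  finally show ?thesis .
qed

lemma C_seen_eq_sum:
  assumes "finite I"
  shows "C_seen I N = (\<Sum>i\<in>I. of_bool (0 < N i))"
  using infsum_fingerprint[OF assms, of "\<lambda>_. 1" N] by (simp add: C_seen_def of_bool_def)

lemma C_tilde_minus_card:
  assumes "finite I" and "u 0 = 0"
  shows "C_tilde I u N - real (card I) = (\<Sum>i\<in>I. u (N i) - of_bool (N i = 0))"
proof -
  have "(\<Sum>i\<in>I. if 0 < N i then u (N i) else 0) = (\<Sum>i\<in>I. u (N i))"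
    using assms(2) by (intro sum.cong) auto
  then have "C_tilde I u N = (\<Sum>i\<in>I. of_bool (0 < N i) + u (N i))"
    unfolding C_tilde_def infsum_fingerprint[OF assms(1)] C_seen_eq_sum[OF assms(1)]
    by (simp add: sum.distrib)
  then have "C_tilde I u N - real (card I) = (\<Sum>i\<in>I. of_bool (0 < N i) + u (N i) - 1)"
    by (simp add: sum_subtractf)
  also have "\<dots> = (\<Sum>i\<in>I. u (N i) - of_bool (N i = 0))"
    by (rule sum.cong) auto
  finally show ?thesis .
qed

lemma abs_C_hat_minus_card_le:
  assumes "finite I" and "real (card I) \<le> k"
  shows "\<bar>C_hat I u k N - real (card I)\<bar> \<le> \<bar>C_tilde I u N - real (card I)\<bar>"
    and "\<bar>C_hat I u k N - real (card I)\<bar> \<le> k"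
proof -
  have "0 \<le> C_seen I N" and "C_seen I N \<le> real (card I)"
    using sum_bounded_above[of I "\<lambda>i. of_bool (0 < N i) :: real" 1]
    by (simp_all add: C_seen_eq_sum[OF assms(1)] sum_nonneg)
  with assms(2) show "\<bar>C_hat I u k N - real (card I)\<bar> \<le> \<bar>C_tilde I u N - real (card I)\<bar>"
    and "\<bar>C_hat I u k N - real (card I)\<bar> \<le> k"
    by (auto simp: C_hat_def abs_le_iff min_def max_def)
qed

lemma integrable_C_hat_square_error:
  assumes "finite I" and "real (card I) \<le> k"
  shows "integrable (measure_pmf P) (\<lambda>N. (C_hat I u k N - real (card I))\<^sup>2)"
proof (rule integrable_measure_pmf_bounded)
  fix N
  show "\<bar>(C_hat I u k N - real (card I))\<^sup>2\<bar> \<le> k\<^sup>2"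
    using abs_C_hat_minus_card_le(2)[OF assms, of u N] by (simp add: abs_le_square_iff[symmetric])
qed

lemma C_hat_square_error_le:
  assumes "finite I" "S \<subseteq> I" "real (card I) \<le> k" "u 0 = 0" "\<And>j. L < j \<Longrightarrow> u j = 0"
  shows "(C_hat I u k N - real (card I))\<^sup>2
    \<le> (\<Sum>i\<in>S. u (N i) - of_bool (N i = 0))\<^sup>2 + k\<^sup>2 * (\<Sum>i\<in>I - S. indicator {..L} (N i))"
proof (cases "\<exists>i\<in>I - S. N i \<le> L")
  case True
  then obtain i where "i \<in> I - S" "N i \<le> L" by blast
  with assms(1) have "1 \<le> (\<Sum>i\<in>I - S. indicator {..L} (N i) :: real)"
    using member_le_sum[of i "I - S" "\<lambda>i. indicator {..L} (N i) :: real"] by auto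
  then have "k\<^sup>2 \<le> k\<^sup>2 * (\<Sum>i\<in>I - S. indicator {..L} (N i))"
    by (simp add: mult_le_cancel_left1)
  moreover have "(C_hat I u k N - real (card I))\<^sup>2 \<le> k\<^sup>2"
    using abs_C_hat_minus_card_le(2)[OF assms(1,3), of u N]
    by (metis abs_le_square_iff abs_ge_self order_trans)
  ultimately show ?thesis
    by (smt (verit) zero_le_power2)
next
  case False
  then have "(\<Sum>i\<in>I - S. u (N i) - of_bool (N i = 0)) = 0"
  proof (intro sum.neutral ballI)
    fix i assume "i \<in> I - S"
    with False have "L < N i"
      by (auto simp: not_le)
    then show "u (N i) - of_bool (N i = 0) = 0"
      using assms(5) by simp
  qed
  then have "C_tilde I u N - real (card I) = (\<Sum>i\<in>S. u (N i) - of_bool (N i = 0))"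
    using assms(1,2,4) by (simp add: C_tilde_minus_card sum.subset_diff[of S I])
  then have "(C_hat I u k N - real (card I))\<^sup>2 \<le> (\<Sum>i\<in>S. u (N i) - of_bool (N i = 0))\<^sup>2"
    using abs_C_hat_minus_card_le(1)[OF assms(1,3), of u N] by (simp add: abs_le_square_iff)
  moreover have "0 \<le> k\<^sup>2 * (\<Sum>i\<in>I - S. indicator {..L} (N i) :: real)"
    by (simp add: sum_nonneg)
  ultimately show ?thesis
    by linarith
qed

lemma u_coef_0 [simp]: "u_coef w L M k n 0 = 0"
  by (simp add: u_coef_def)

lemma u_coef_gt: "L < j \<Longrightarrow> u_coef w L M k n j = 0"
  by (simp add: u_coef_def)

lemma abs_u_coef_le: "\<bar>u_coef w L M k n j\<bar> \<le> (\<Sum>i=1..L. \<bar>u_coef w L M k n i\<bar>)"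
proof (cases "1 \<le> j \<and> j \<le> L")
  case True
  then show ?thesis by (intro member_le_sum) auto
next
  case False
  then have "u_coef w L M k n j = 0"
    by (cases "j = 0") (auto simp: u_coef_gt)
  then show ?thesis
    by (simp add: sum_nonneg)
qed

lemma expectation_poisson_u_coef:
  assumes "0 < k" "0 < n" "0 < M" "0 < c"
  shows "measure_pmf.expectation (poisson_pmf (n * c / k)) (\<lambda>v. u_coef w L M k n v - of_bool (v = 0))
       = exp (- (n * c / k)) * ((\<Sum>j=1..L. (c / real M) ^ j * w j) - 1)"
proof -
  let ?lam = "n * c / k"
  have summand: "u_coef w L M k n j * (?lam ^ j / fact j * exp (- ?lam)) = exp (- ?lam) * ((c / real M) ^ j * w j)"
    if "j \<in> {1..L}" for j
  proof -
    have "(k / (n * real M)) ^ j * ?lam ^ j = (c / real M) ^ j"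
      unfolding power_mult_distrib[symmetric] using assms by (simp add: field_simps)
    with that assms show ?thesis
      by (simp add: u_coef_def field_simps)
  qed
  have "{..L} = insert 0 {1..L}"
    by auto
  then have "measure_pmf.expectation (poisson_pmf ?lam) (\<lambda>v. u_coef w L M k n v - of_bool (v = 0))
      = (\<Sum>j=1..L. u_coef w L M k n j * (?lam ^ j / fact j * exp (- ?lam))) - exp (- ?lam)"
    using assms by (simp add: expectation_poisson_finite_support[where L = L] u_coef_gt)
  also have "\<dots> = exp (- ?lam) * (\<Sum>j=1..L. (c / real M) ^ j * w j) - exp (- ?lam)"
    by (subst sum_distrib_left) (simp only: sum.cong[OF refl summand])
  also have "\<dots> = exp (- ?lam) * ((\<Sum>j=1..L. (c / real M) ^ j * w j) - 1)"
    by (simp add: right_diff_distrib)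
  finally show ?thesis .
qed

section \<open>The Poisson urn\<close>

locale poisson_urn =
  fixes I :: "'c set" and kc :: "'c \<Rightarrow> nat" and n \<alpha> \<beta> :: real
    and L M :: nat and w :: "nat \<Rightarrow> real"
  assumes finite_I: "finite I" and kc_pos: "\<forall>i\<in>I. 0 < kc i"
    and total_ge_2: "(\<Sum>i\<in>I. kc i) \<ge> 2"
    and n_pos: "n > 0" and \<alpha>_pos: "\<alpha> > 0" and \<beta>_gt_\<alpha>: "\<beta> > \<alpha>"
    and L_eq: "real L = \<alpha> * ln (real (\<Sum>i\<in>I. kc i))"
    and M_eq: "real M = \<beta> * real (\<Sum>i\<in>I. kc i) * ln (real (\<Sum>i\<in>I. kc i)) / n"
begin

abbreviation k :: real where "k \<equiv> real (\<Sum>i\<in>I. kc i)"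

abbreviation u :: "nat \<Rightarrow> real" where "u \<equiv> u_coef w L M k n"

abbreviation max_second_moment :: real where
  "max_second_moment \<equiv>
     Max ((\<lambda>m. measure_pmf.expectation (poisson_pmf (n * real m / k)) (\<lambda>N. (u N)\<^sup>2)) ` {1..M})"

definition rate :: "'c \<Rightarrow> real" where "rate i = n * real (kc i) / k"

definition small :: "'c set" where "small = {i \<in> I. kc i \<le> M}"

lemma k_ge_2: "2 \<le> k"
  using total_ge_2 by linarith

lemma ln_k_pos: "0 < ln k"
  using k_ge_2 by simp

lemma card_I_le_k: "real (card I) \<le> k"
proof -
  have "card I \<le> (\<Sum>i\<in>I. kc i)"
    using kc_pos sum_mono[of I "\<lambda>_. 1::nat" kc] by (simp add: Suc_le_eq)
  then show ?thesis
    by linarith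
qed

lemma small_subset: "small \<subseteq> I"
  by (auto simp: small_def)

lemma card_small_le_k: "real (card small) \<le> k"
  using card_mono[OF finite_I, of small] card_I_le_k by (auto simp: small_def)

lemma card_large_le_k: "real (card (I - small)) \<le> k"
  using card_mono[OF finite_I, of "I - small"] card_I_le_k by auto

lemma L_ge_1: "1 \<le> L"
  using L_eq \<alpha>_pos ln_k_pos by (metis less_one mult_pos_pos not_le of_nat_0 order_less_irrefl)

lemma M_pos: "0 < M"
proof -
  have "0 < \<beta> * k * ln k / n"
    using \<alpha>_pos \<beta>_gt_\<alpha> k_ge_2 ln_k_pos n_pos by simp
  then show ?thesis
    by (metis M_eq of_nat_0_less_iff)
qed

lemma poisson_hist_eq: "poisson_hist I kc n = Pi_pmf I 0 (\<lambda>i. poisson_pmf (rate i))"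
  by (simp add: poisson_hist_def rate_def)

lemma rate_pos: "i \<in> I \<Longrightarrow> 0 < rate i"
  using kc_pos n_pos k_ge_2 by (simp add: rate_def)

lemma exp_neg_rate_le: "i \<in> I \<Longrightarrow> exp (- rate i) \<le> exp (- n / k)"
  using kc_pos n_pos k_ge_2 by (simp add: rate_def divide_right_mono Suc_le_eq)

lemma abs_u_minus_indicator_le: "\<bar>u v - of_bool (v = 0)\<bar> \<le> (\<Sum>j=1..L. \<bar>u j\<bar>) + 1"
  using abs_u_coef_le[of w L M k n v] by (cases "v = 0") auto

lemma Bw_err_ge: "m \<in> {1..M} \<Longrightarrow> \<bar>(\<Sum>j=1..L. (real m / real M) ^ j * w j) - 1\<bar> \<le> Bw_err M L w"
  unfolding Bw_err_def by (rule Max_ge) auto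

lemma Bw_err_nonneg: "0 \<le> Bw_err M L w"
proof -
  have "1 \<in> {1..M}"
    using M_pos by simp
  from Bw_err_ge[OF this] show ?thesis
    by linarith
qed

lemma second_moment_le_max: "m \<in> {1..M} \<Longrightarrow>
    measure_pmf.expectation (poisson_pmf (n * real m / k)) (\<lambda>N. (u N)\<^sup>2) \<le> max_second_moment"
  by (rule Max_ge) auto

lemma max_second_moment_nonneg: "0 \<le> max_second_moment"
proof -
  have "0 \<le> measure_pmf.expectation (poisson_pmf (n * real 1 / k)) (\<lambda>N. (u N)\<^sup>2)"
    by simp
  also have "\<dots> \<le> max_second_moment"
    using M_pos by (intro second_moment_le_max) auto
  finally show ?thesis .
qed

lemma abs_mean_small_le:
  assumes "i \<in> small"
  shows "\<bar>measure_pmf.expectation (poisson_pmf (rate i)) (\<lambda>v. u v - of_bool (v = 0))\<bar>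
    \<le> exp (- n / k) * Bw_err M L w"
proof -
  have i: "i \<in> I" "kc i \<in> {1..M}"
    using assms kc_pos by (auto simp: small_def Suc_le_eq)
  have "measure_pmf.expectation (poisson_pmf (rate i)) (\<lambda>v. u v - of_bool (v = 0))
      = exp (- rate i) * ((\<Sum>j=1..L. (real (kc i) / real M) ^ j * w j) - 1)"
    unfolding rate_def using i k_ge_2 n_pos M_pos by (intro expectation_poisson_u_coef) auto
  then show ?thesis
    using exp_neg_rate_le[OF i(1)] Bw_err_ge[OF i(2)] by (simp add: abs_mult mult_mono)
qed

lemma second_moment_small_le:
  assumes "i \<in> small"
  shows "measure_pmf.expectation (poisson_pmf (rate i)) (\<lambda>v. (u v - of_bool (v = 0))\<^sup>2)
    \<le> max_second_moment + exp (- n / k)"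
proof -
  have i: "i \<in> I" "kc i \<in> {1..M}"
    using assms kc_pos by (auto simp: small_def Suc_le_eq)
  have "measure_pmf.expectation (poisson_pmf (rate i)) (\<lambda>v. (u v - of_bool (v = 0))\<^sup>2)
      = measure_pmf.expectation (poisson_pmf (rate i)) (\<lambda>v. (u v)\<^sup>2) + exp (- rate i)"
    using rate_pos[OF i(1)]
    by (subst expectation_square_minus_indicator_zero[where u = u, OF u_coef_0 abs_u_coef_le]) simp
  then show ?thesis
    using second_moment_le_max[OF i(2)] exp_neg_rate_le[OF i(1)] unfolding rate_def by linarith
qed

lemma prob_large_le:
  assumes "i \<in> I - small"
  shows "measure_pmf.prob (poisson_pmf (rate i)) {..L} \<le> k powr (- \<beta> + \<alpha> * ln (exp 1 * \<beta> / \<alpha>))"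
proof -
  have "\<beta> * ln k = n * real M / k"
    using M_eq n_pos k_ge_2 by (simp add: field_simps)
  also have "\<dots> \<le> rate i"
    using assms n_pos k_ge_2 unfolding rate_def small_def
    by (intro divide_right_mono mult_left_mono) auto
  finally have rate: "\<beta> * ln k \<le> rate i" .
  have L_le: "real L \<le> \<beta> * ln k"
    using L_eq \<beta>_gt_\<alpha> ln_k_pos by simp
  have "measure_pmf.prob (poisson_pmf (rate i)) {..L} \<le> exp (- rate i) * (exp 1 * rate i / real L) ^ L"
    using L_ge_1 L_le rate by (intro poisson_prob_atMost_le) auto
  also have "\<dots> \<le> exp (- (\<beta> * ln k)) * (exp 1 * (\<beta> * ln k) / real L) ^ L"
    using L_ge_1 L_le rate by (intro chernoff_bound_antimono) auto
  also have "\<dots> = k powr (- \<beta> + \<alpha> * ln (exp 1 * \<beta> / \<alpha>))"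
    using k_ge_2 \<alpha>_pos \<beta>_gt_\<alpha> L_eq by (intro chernoff_bound_at_log) auto
  finally show ?thesis .
qed

lemma expectation_error_le_split:
  "measure_pmf.expectation (poisson_hist I kc n) (\<lambda>N. (C_hat I u k N - real (card I))\<^sup>2)
    \<le> measure_pmf.expectation (poisson_hist I kc n) (\<lambda>N. (\<Sum>i\<in>small. u (N i) - of_bool (N i = 0))\<^sup>2)
      + k\<^sup>2 * (\<Sum>i\<in>I - small. measure_pmf.prob (poisson_pmf (rate i)) {..L})"
proof -
  let ?P = "poisson_hist I kc n"
  let ?small_sum = "\<lambda>N. (\<Sum>i\<in>small. u (N i) - of_bool (N i = 0))\<^sup>2"
  let ?tail = "\<lambda>i N. indicator {..L} (N i) :: real"
  have integrable_small_sum: "integrable ?P ?small_sum"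
    unfolding poisson_hist_eq using abs_u_minus_indicator_le by (rule integrable_Pi_pmf_sum_square)
  have integrable_tail: "integrable ?P (?tail i)" for i
    by (rule integrable_measure_pmf_bounded[where B = 1]) (simp add: indicator_def)
  have "measure_pmf.expectation ?P (\<lambda>N. (C_hat I u k N - real (card I))\<^sup>2)
      \<le> measure_pmf.expectation ?P (\<lambda>N. ?small_sum N + k\<^sup>2 * (\<Sum>i\<in>I - small. ?tail i N))"
    using integrable_small_sum integrable_tail integrable_C_hat_square_error[OF finite_I card_I_le_k]
      C_hat_square_error_le[where u = u, OF finite_I small_subset card_I_le_k u_coef_0 u_coef_gt]
    by (intro integral_mono) auto
  also have "\<dots> = measure_pmf.expectation ?P ?small_sum
      + k\<^sup>2 * (\<Sum>i\<in>I - small. measure_pmf.expectation ?P (?tail i))"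
    using integrable_small_sum integrable_tail
    by (simp add: Bochner_Integration.integral_add Bochner_Integration.integral_sum
        Bochner_Integration.integrable_sum)
  also have "(\<Sum>i\<in>I - small. measure_pmf.expectation ?P (?tail i))
      = (\<Sum>i\<in>I - small. measure_pmf.prob (poisson_pmf (rate i)) {..L})"
  proof (rule sum.cong[OF refl])
    fix i assume "i \<in> I - small"
    then show "measure_pmf.expectation ?P (?tail i) = measure_pmf.prob (poisson_pmf (rate i)) {..L}"
      unfolding poisson_hist_eq
      using expectation_Pi_pmf_component[OF finite_I, of i 0 "\<lambda>i. poisson_pmf (rate i)" "indicator {..L}"]
      by simp
  qed
  finally show ?thesis .
qed

lemma expectation_small_sum_le:
  "measure_pmf.expectation (poisson_hist I kc n) (\<lambda>N. (\<Sum>i\<in>small. u (N i) - of_bool (N i = 0))\<^sup>2)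
    \<le> k\<^sup>2 * exp (- 2 * n / k) * (Bw_err M L w)\<^sup>2 + k * exp (- n / k) + k * max_second_moment"
proof -
  have "measure_pmf.expectation (poisson_hist I kc n) (\<lambda>N. (\<Sum>i\<in>small. u (N i) - of_bool (N i = 0))\<^sup>2)
      \<le> k * (max_second_moment + exp (- n / k)) + (k * (exp (- n / k) * Bw_err M L w))\<^sup>2"
    unfolding poisson_hist_eq
    by (rule expectation_Pi_pmf_sum_square_le[where X = "\<lambda>v. u v - of_bool (v = 0)"
          and p = "\<lambda>i. poisson_pmf (rate i)",
          OF finite_I small_subset abs_u_minus_indicator_le card_small_le_k
          second_moment_small_le abs_mean_small_le])
      (use max_second_moment_nonneg Bw_err_nonneg in simp_all)
  also have "(k * (exp (- n / k) * Bw_err M L w))\<^sup>2 = k\<^sup>2 * exp (- 2 * n / k) * (Bw_err M L w)\<^sup>2"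
    by (simp add: power_mult_distrib power2_eq_square exp_add[symmetric])
  finally show ?thesis
    by (simp add: algebra_simps)
qed

lemma large_colors_term_le:
  "k\<^sup>2 * (\<Sum>i\<in>I - small. measure_pmf.prob (poisson_pmf (rate i)) {..L})
    \<le> k powr (- (\<beta> - \<alpha> * ln (exp 1 * \<beta> / \<alpha>) - 3))"
proof -
  let ?T = "k powr (- \<beta> + \<alpha> * ln (exp 1 * \<beta> / \<alpha>))"
  have "(\<Sum>i\<in>I - small. measure_pmf.prob (poisson_pmf (rate i)) {..L}) \<le> real (card (I - small)) * ?T"
    by (rule sum_bounded_above) (rule prob_large_le)
  also have "\<dots> \<le> k * ?T"
    using card_large_le_k by (rule mult_right_mono) simp
  finally have "k\<^sup>2 * (\<Sum>i\<in>I - small. measure_pmf.prob (poisson_pmf (rate i)) {..L}) \<le> k\<^sup>2 * (k * ?T)"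
    by (rule mult_left_mono) simp
  also have "k\<^sup>2 * (k * ?T) = k powr (real 3) * ?T"
    using k_ge_2 by (simp add: powr_realpow power3_eq_cube power2_eq_square)
  also have "\<dots> = k powr (- (\<beta> - \<alpha> * ln (exp 1 * \<beta> / \<alpha>) - 3))"
    by (simp add: powr_add[symmetric] algebra_simps)
  finally show ?thesis .
qed

lemma mean_squared_error_le:
  "measure_pmf.expectation (poisson_hist I kc n) (\<lambda>N. (C_hat I u k N - real (card I))\<^sup>2)
    \<le> k\<^sup>2 * exp (- 2 * n / k) * (Bw_err M L w)\<^sup>2 + k * exp (- n / k) + k * max_second_moment
      + k powr (- (\<beta> - \<alpha> * ln (exp 1 * \<beta> / \<alpha>) - 3))"
  using expectation_error_le_split expectation_small_sum_le large_colors_term_le by linarith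

end

theorem proposition1:
  fixes I :: "'c set" and kc :: "'c \<Rightarrow> nat" and n \<alpha> \<beta> :: real
    and L M :: nat and w :: "nat \<Rightarrow> real"
  assumes "finite I" and "\<forall>i\<in>I. 0 < kc i"
    and "(\<Sum>i\<in>I. kc i) \<ge> 2"
    and "n > 0" and "\<alpha> > 0" and "\<beta> > \<alpha>"
    and "real L = \<alpha> * ln (real (\<Sum>i\<in>I. kc i))"
    and "real M = \<beta> * real (\<Sum>i\<in>I. kc i) * ln (real (\<Sum>i\<in>I. kc i)) / n"
  shows "let k = real (\<Sum>i\<in>I. kc i); C = real (card I); u = u_coef w L M k n in
    measure_pmf.expectation (poisson_hist I kc n) (\<lambda>N. (C_hat I u k N - C)\<^sup>2)
      \<le> k\<^sup>2 * exp (- 2 * n / k) * (Bw_err M L w)\<^sup>2 + k * exp (- n / k)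
        + k * Max ((\<lambda>m. measure_pmf.expectation (poisson_pmf (n * real m / k)) (\<lambda>N. (u N)\<^sup>2)) ` {1..M})
        + k powr (- (\<beta> - \<alpha> * ln (exp 1 * \<beta> / \<alpha>) - 3))"
proof -
  interpret poisson_urn I kc n \<alpha> \<beta> L M w
    using assms by unfold_locales
  show ?thesis
    using mean_squared_error_le by (simp only: Let_def)
qed

end
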